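(* Let $s,t_1,\dots,t_n\in\mathbb{R}^2$ be distinct points, with $T=\{t_1,\dots,t_n\}$ ordered so that $D_{st_1}\le\dots\le D_{st_n}$, and let $P_s=P_r>0$, $N_0>0$, $\alpha\ge 2$. Let $m$ be the midpoint of the segment $[s,t_n]$, and let $C_s$, $C_m$ be the closed disks of radius $D_{st_n}/2$ centered at $s$ and at $m$ respectively. If $T\subseteq C_s\cup C_m$ (and $m\notin T$), then placing the relay at $m$ maximizes the multicast rate $R^*_{sT}(r)$ over all relay positions $r\in\mathbb{R}^2\setminus(\{s\}\cup T)$.
   Context: $D_{uv}$ is Euclidean distance. Achievable low-SNR broadcast-relay hypergraph model: for a relay position $r\notin\{s\}\cup T$, the node set is $\mathcal{N}=\{s,r\}\cup T$. The hyperarcs are $(s,J)$ for nonempty $J\subseteq\{r\}\cup T$ and $(r,J)$ for nonempty $J\subseteq T$. A power allocation assigns $P_{sJ}\ge0$, $P_{rJ}\ge0$ with $\sum_J P_{sJ}\le P_s$ and $\sum_J P_{rJ}\le P_r$; the capacity of hyperarc $(i,J)$ is $c_{iJ}=P_{iJ}/(N_0\max_{j\in J}D_{ij}^{\alpha})$. For a receiver $t\in T$, $R_{st}$ is the minimum, over all $S\subseteq\mathcal{N}$ with $s\in S$, $t\notin S$, of $\sum c_{iJ}$ over hyperarcs with $i\in S$ and $J\not\subseteq S$. The multicast rate is $R_{sT}=\min_{t\in T}R_{st}$, and $R^*_{sT}(r)$ is its maximum over all power allocations. *)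

theory Defs
  imports "HOL-Analysis.Analysis"
begin

type_synonym point = "real ^ 2"

definition src_arcs :: "point \<Rightarrow> point \<Rightarrow> point set \<Rightarrow> point set set" where
  "src_arcs s r T = {J. J \<noteq> {} \<and> J \<subseteq> insert r T}"

definition relay_arcs :: "point set \<Rightarrow> point set set" where
  "relay_arcs T = {J. J \<noteq> {} \<and> J \<subseteq> T}"

definition hyperarcs :: "point \<Rightarrow> point \<Rightarrow> point set \<Rightarrow> (point \<times> point set) set" where
  "hyperarcs s r T = (\<lambda>J. (s, J)) ` src_arcs s r T \<union> (\<lambda>J. (r, J)) ` relay_arcs T"

text \<open>Power allocation: P i J is the power of node i on hyperarc (i,J).\<close>
definition valid_alloc ::
  "real \<Rightarrow> real \<Rightarrow> point \<Rightarrow> point \<Rightarrow> point set \<Rightarrow> (point \<Rightarrow> point set \<Rightarrow> real) \<Rightarrow> bool" where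
  "valid_alloc Ps Pr s r T P \<longleftrightarrow>
     (\<forall>(i, J) \<in> hyperarcs s r T. 0 \<le> P i J) \<and>
     (\<Sum>J \<in> src_arcs s r T. P s J) \<le> Ps \<and>
     (\<Sum>J \<in> relay_arcs T. P r J) \<le> Pr"

definition capacity :: "real \<Rightarrow> real \<Rightarrow> (point \<Rightarrow> point set \<Rightarrow> real) \<Rightarrow> point \<Rightarrow> point set \<Rightarrow> real" where
  "capacity N0 \<alpha> P i J = P i J / (N0 * (MAX j \<in> J. dist i j powr \<alpha>))"

definition cut_value ::
  "real \<Rightarrow> real \<Rightarrow> point \<Rightarrow> point \<Rightarrow> point set \<Rightarrow> (point \<Rightarrow> point set \<Rightarrow> real) \<Rightarrow> point set \<Rightarrow> real" where
  "cut_value N0 \<alpha> s r T P S =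
     (\<Sum>(i, J) \<in> {(i, J) \<in> hyperarcs s r T. i \<in> S \<and> \<not> J \<subseteq> S}. capacity N0 \<alpha> P i J)"

definition rate_st ::
  "real \<Rightarrow> real \<Rightarrow> point \<Rightarrow> point \<Rightarrow> point set \<Rightarrow> (point \<Rightarrow> point set \<Rightarrow> real) \<Rightarrow> point \<Rightarrow> real" where
  "rate_st N0 \<alpha> s r T P t =
     (MIN S \<in> {S. S \<subseteq> insert s (insert r T) \<and> s \<in> S \<and> t \<notin> S}. cut_value N0 \<alpha> s r T P S)"

definition multicast_rate ::
  "real \<Rightarrow> real \<Rightarrow> point \<Rightarrow> point \<Rightarrow> point set \<Rightarrow> (point \<Rightarrow> point set \<Rightarrow> real) \<Rightarrow> real" where
  "multicast_rate N0 \<alpha> s r T P = (MIN t \<in> T. rate_st N0 \<alpha> s r T P t)"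

definition opt_rate :: "real \<Rightarrow> real \<Rightarrow> real \<Rightarrow> real \<Rightarrow> point \<Rightarrow> point set \<Rightarrow> point \<Rightarrow> real" where
  "opt_rate Ps Pr N0 \<alpha> s T r =
     (SUP P \<in> {P. valid_alloc Ps Pr s r T P}. multicast_rate N0 \<alpha> s r T P)"

end

theory Submission imports Defs begin

(* Write d = D_{s t_n} and c = P_s / (N0 (d/2)^alpha).  The theorem is the conjunction of two
   bounds, both proved for all alpha >= 1:

   Converse.  For any relay position r and any allocation with P_r <= P_s, the rate to t_n is
   at most the value of two particular cuts: the one keeping everything but t_n and r on the
   source side, and the one keeping everything but t_n.  Their values are at most
   x/d^alpha + y/D_sr^alpha and x/d^alpha + P_s/D_rt_n^alpha, where x and y are the source
   powers spent on hyperarcs reaching t_n, resp. reaching r but not t_n.  An inequality for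
   the convex function u |-> u^alpha shows that the smaller of the two is at most c wherever
   r lies.  Hence R*_sT(r) <= c for every relay position r.

   Achievability.  With the relay at m = midpoint s t_n, let the source spend all its power on
   the hyperarc to m and the receivers in C_s, and the relay all its power on the hyperarc to
   the receivers in C_m.  Both hyperarcs have radius d/2, and since T is covered by C_s and C_m
   every cut separating a receiver crosses one of them; so this allocation achieves rate c. *)

section \<open>Inequalities for the path-loss function\<close>

lemma powr_increment_mono:
  fixes x y h \<alpha> :: real
  assumes "0 < x" "0 < h" "x + h \<le> y" "1 \<le> \<alpha>"
  shows "(x + h) powr \<alpha> - x powr \<alpha> \<le> (y + h) powr \<alpha> - y powr \<alpha>"
proof -
  have deriv: "\<And>z. 0 < z \<Longrightarrow> DERIV (\<lambda>u. u powr \<alpha>) z :> \<alpha> * z powr (\<alpha> - 1)"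
    by (rule has_real_derivative_powr)
  obtain z1 where z1: "x < z1" "z1 < x + h"
    "(x + h) powr \<alpha> - x powr \<alpha> = (x + h - x) * (\<alpha> * z1 powr (\<alpha> - 1))"
    using MVT2[of x "x + h" "\<lambda>u. u powr \<alpha>" "\<lambda>z. \<alpha> * z powr (\<alpha> - 1)"] deriv assms by force
  obtain z2 where z2: "y < z2" "z2 < y + h"
    "(y + h) powr \<alpha> - y powr \<alpha> = (y + h - y) * (\<alpha> * z2 powr (\<alpha> - 1))"
    using MVT2[of y "y + h" "\<lambda>u. u powr \<alpha>" "\<lambda>z. \<alpha> * z powr (\<alpha> - 1)"] deriv assms by force
  have "z1 powr (\<alpha> - 1) \<le> z2 powr (\<alpha> - 1)"
    using z1 z2 assms by (intro powr_mono2) auto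
  then have "h * (\<alpha> * z1 powr (\<alpha> - 1)) \<le> h * (\<alpha> * z2 powr (\<alpha> - 1))"
    using assms by (intro mult_left_mono) auto
  then show ?thesis using z1 z2 by simp
qed

lemma powr_gain_bound:
  fixes a d \<alpha> :: real
  assumes "0 < a" "a < d / 2" "1 \<le> \<alpha>"
  shows "d powr \<alpha> - a powr \<alpha> \<le> (2 powr \<alpha> - 1) * (d - a) powr \<alpha>"
proof -
  have "(a + (d - 2*a)) powr \<alpha> - a powr \<alpha> \<le> (d + (d - 2*a)) powr \<alpha> - d powr \<alpha>"
    using assms by (intro powr_increment_mono) auto
  moreover have "(d + (d - 2*a)) powr \<alpha> = 2 powr \<alpha> * (d - a) powr \<alpha>"
    using assms powr_mult[of 2 "d - a" \<alpha>] by (simp add: algebra_simps)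
  ultimately show ?thesis by (simp add: algebra_simps)
qed

lemma min_le_convex_combination:
  fixes u v L :: real
  assumes "0 \<le> L" "L \<le> 1"
  shows "min u v \<le> L * u + (1 - L) * v"
proof -
  have "L * min u v \<le> L * u" "(1 - L) * min u v \<le> (1 - L) * v"
    using assms by (intro mult_left_mono; simp)+
  then show ?thesis by (simp add: algebra_simps)
qed

text \<open>The two-cut bound when the relay is at least d/2 away from the source: the cut that
  leaves out the relay already has value at most P/(d/2)^\<alpha>.\<close>
lemma two_cut_bound_far_relay:
  fixes a d \<alpha> x y P :: real
  assumes "0 < d" "d / 2 \<le> a" "0 \<le> \<alpha>" "0 \<le> x" "0 \<le> y" "x + y \<le> P"
  shows "x / d powr \<alpha> + y / a powr \<alpha> \<le> P / (d / 2) powr \<alpha>"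
proof -
  have pos: "0 < (d / 2) powr \<alpha>" using assms by simp
  have "x / d powr \<alpha> \<le> x / (d / 2) powr \<alpha>" "y / a powr \<alpha> \<le> y / (d / 2) powr \<alpha>"
    using assms pos by (intro divide_left_mono powr_mono2; simp)+
  then have "x / d powr \<alpha> + y / a powr \<alpha> \<le> (x + y) / (d / 2) powr \<alpha>"
    by (simp add: add_divide_distrib)
  also have "\<dots> \<le> P / (d / 2) powr \<alpha>" using assms pos by (intro divide_right_mono) auto
  finally show ?thesis .
qed

text \<open>The two-cut bound when the relay is closer than d/2 to the source: a convex combination
  of the two cut values, weighted by (a/d)^\<alpha>, is at most P/(d/2)^\<alpha>.\<close>
lemma two_cut_bound_near_relay:
  fixes a b d \<alpha> x y P :: real
  assumes "0 < a" "a < d / 2" "0 < b" "d \<le> a + b" "1 \<le> \<alpha>" "0 \<le> x" "0 \<le> y" "x + y \<le> P"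
  shows "min (x / d powr \<alpha> + y / a powr \<alpha>) (x / d powr \<alpha> + P / b powr \<alpha>) \<le> P / (d / 2) powr \<alpha>"
proof -
  define D A B where "D = d powr \<alpha>" and "A = a powr \<alpha>" and "B = b powr \<alpha>"
  define L where "L = A / D"
  have pos: "0 < D" "0 < A" "0 < B" and "0 \<le> P" using assms by (auto simp: D_def A_def B_def)
  have "A \<le> D" unfolding A_def D_def using assms by (intro powr_mono2) auto
  then have L: "0 \<le> L" "L \<le> 1" using pos by (auto simp: L_def)
  have gain: "(D - A) / B \<le> 2 powr \<alpha> - 1"
  proof -
    have "D - A \<le> (2 powr \<alpha> - 1) * (d - a) powr \<alpha>"
      unfolding D_def A_def using assms by (intro powr_gain_bound) auto
    also have "\<dots> \<le> (2 powr \<alpha> - 1) * B"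
      unfolding B_def using assms ge_one_powr_ge_zero[of 2 \<alpha>]
      by (intro mult_left_mono powr_mono2) auto
    finally show ?thesis using pos by (simp add: divide_le_eq)
  qed
  have "min (x / D + y / A) (x / D + P / B) \<le> L * (x / D + y / A) + (1 - L) * (x / D + P / B)"
    using L by (rule min_le_convex_combination)
  also have "\<dots> = (x + y) / D + (1 - L) * (P / B)"
    using pos by (simp add: L_def field_simps)
  also have "\<dots> \<le> P / D + (1 - L) * (P / B)"
    using pos assms by (simp add: divide_right_mono)
  also have "\<dots> = P * (1 + (D - A) / B) / D"
    using pos by (simp add: L_def field_simps)
  also have "\<dots> \<le> P * 2 powr \<alpha> / D"
    using gain pos \<open>0 \<le> P\<close> by (intro divide_right_mono mult_left_mono) auto
  also have "\<dots> = P / (d / 2) powr \<alpha>"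
    using assms by (simp add: D_def powr_divide)
  finally show ?thesis by (simp add: D_def A_def B_def)
qed

text \<open>Wherever the relay is (a = D_sr, b = D_rt, d = D_st \<le> a + b), one of the two cuts has
  value at most P/(d/2)^\<alpha>.\<close>
lemma two_cut_bound:
  fixes a b d \<alpha> x y P :: real
  assumes "0 < a" "0 < b" "0 < d" "d \<le> a + b" "1 \<le> \<alpha>" "0 \<le> x" "0 \<le> y" "x + y \<le> P"
  shows "min (x / d powr \<alpha> + y / a powr \<alpha>) (x / d powr \<alpha> + P / b powr \<alpha>) \<le> P / (d / 2) powr \<alpha>"
proof (cases "d / 2 \<le> a")
  case True
  then show ?thesis using assms two_cut_bound_far_relay[of d a \<alpha> x y P] by linarith
next
  case False
  then show ?thesis using assms by (intro two_cut_bound_near_relay) auto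
qed

section \<open>Capacities, cuts and allocations\<close>

lemma finite_src_arcs: "finite T \<Longrightarrow> finite (src_arcs s r T)"
  unfolding src_arcs_def by (rule finite_subset[of _ "Pow (insert r T)"]) auto

lemma finite_relay_arcs: "finite T \<Longrightarrow> finite (relay_arcs T)"
  unfolding relay_arcs_def by (rule finite_subset[of _ "Pow T"]) auto

lemma finite_hyperarcs: "finite T \<Longrightarrow> finite (hyperarcs s r T)"
  unfolding hyperarcs_def by (simp add: finite_src_arcs finite_relay_arcs)

text \<open>Every hyperarc has a finite nonempty set of receivers, so the maximum in its capacity
  is well defined.\<close>
lemma hyperarc_receivers:
  assumes "finite T" "(i, J) \<in> hyperarcs s r T"
  shows "finite J" "J \<noteq> {}"
  using assms by (auto simp: hyperarcs_def src_arcs_def relay_arcs_def intro: finite_subset)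

lemma capacity_le_single:
  assumes "0 \<le> P i J" "0 < N0" "finite J" "j \<in> J" "i \<noteq> j"
  shows "capacity N0 \<alpha> P i J \<le> P i J / (N0 * dist i j powr \<alpha>)"
proof -
  have pos: "0 < N0 * dist i j powr \<alpha>" using assms by simp
  have le: "N0 * dist i j powr \<alpha> \<le> N0 * (MAX k \<in> J. dist i k powr \<alpha>)"
    using assms by (intro mult_left_mono Max_ge) auto
  show ?thesis unfolding capacity_def
    using divide_left_mono[OF le assms(1) mult_pos_pos[OF order.strict_trans2[OF pos le] pos]] .
qed

lemma capacity_ge_radius:
  assumes "0 \<le> P i J" "0 < N0" "0 \<le> \<alpha>" "0 < \<rho>" "finite J" "j \<in> J" "i \<noteq> j"
    and "\<And>k. k \<in> J \<Longrightarrow> dist i k \<le> \<rho>"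
  shows "P i J / (N0 * \<rho> powr \<alpha>) \<le> capacity N0 \<alpha> P i J"
proof -
  have "0 < dist i j powr \<alpha>" using assms by simp
  also have "dist i j powr \<alpha> \<le> (MAX k \<in> J. dist i k powr \<alpha>)" using assms by (intro Max_ge) auto
  finally have "0 < (MAX k \<in> J. dist i k powr \<alpha>)" .
  moreover have "(MAX k \<in> J. dist i k powr \<alpha>) \<le> \<rho> powr \<alpha>"
    using assms by (subst Max_le_iff) (auto intro: powr_mono2)
  ultimately show ?thesis unfolding capacity_def using assms
    by (intro divide_left_mono mult_left_mono mult_pos_pos) auto
qed

lemma sum_capacity_le_single:
  assumes "finite X" "0 < N0" "i \<noteq> j"
    and "\<And>J. J \<in> X \<Longrightarrow> finite J \<and> j \<in> J \<and> 0 \<le> P i J"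
  shows "(\<Sum>J\<in>X. capacity N0 \<alpha> P i J) \<le> (\<Sum>J\<in>X. P i J) / (N0 * dist i j powr \<alpha>)"
proof -
  have "(\<Sum>J\<in>X. capacity N0 \<alpha> P i J) \<le> (\<Sum>J\<in>X. P i J / (N0 * dist i j powr \<alpha>))"
    using assms by (intro sum_mono capacity_le_single) auto
  then show ?thesis by (simp add: sum_divide_distrib)
qed

lemma valid_alloc_nonneg:
  assumes "valid_alloc Ps Pr s r T P"
  shows "J \<in> src_arcs s r T \<Longrightarrow> 0 \<le> P s J" and "J \<in> relay_arcs T \<Longrightarrow> 0 \<le> P r J"
  using assms by (auto simp: valid_alloc_def hyperarcs_def)

lemma valid_alloc_partial_budget:
  assumes "valid_alloc Ps Pr s r T P" "finite T"
  shows "X \<subseteq> src_arcs s r T \<Longrightarrow> (\<Sum>J\<in>X. P s J) \<le> Ps"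
    and "Z \<subseteq> relay_arcs T \<Longrightarrow> (\<Sum>J\<in>Z. P r J) \<le> Pr"
proof -
  assume "X \<subseteq> src_arcs s r T"
  then have "(\<Sum>J\<in>X. P s J) \<le> (\<Sum>J\<in>src_arcs s r T. P s J)"
    using valid_alloc_nonneg(1)[OF assms(1)] by (intro sum_mono2 finite_src_arcs assms(2)) auto
  then show "(\<Sum>J\<in>X. P s J) \<le> Ps" using assms(1) by (simp add: valid_alloc_def)
next
  assume "Z \<subseteq> relay_arcs T"
  then have "(\<Sum>J\<in>Z. P r J) \<le> (\<Sum>J\<in>relay_arcs T. P r J)"
    using valid_alloc_nonneg(2)[OF assms(1)] by (intro sum_mono2 finite_relay_arcs assms(2)) auto
  then show "(\<Sum>J\<in>Z. P r J) \<le> Pr" using assms(1) by (simp add: valid_alloc_def)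
qed

lemma capacity_nonneg:
  assumes "valid_alloc Ps Pr s r T P" "(i, J) \<in> hyperarcs s r T" "finite T" "0 \<le> N0"
  shows "0 \<le> capacity N0 \<alpha> P i J"
proof -
  obtain j where "j \<in> J" using hyperarc_receivers[OF assms(3,2)] by auto
  then have "dist i j powr \<alpha> \<le> (MAX k \<in> J. dist i k powr \<alpha>)"
    using hyperarc_receivers[OF assms(3,2)] by (intro Max_ge) auto
  then have "0 \<le> (MAX k \<in> J. dist i k powr \<alpha>)" by (rule order.trans[rotated]) simp
  moreover have "0 \<le> P i J" using assms(1,2) by (auto simp: valid_alloc_def)
  ultimately show ?thesis unfolding capacity_def using assms(4) by simp
qed

lemma capacity_le_cut_value:
  assumes "valid_alloc Ps Pr s r T P" "finite T" "0 \<le> N0"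
    and "(i, J) \<in> hyperarcs s r T" "i \<in> S" "\<not> J \<subseteq> S"
  shows "capacity N0 \<alpha> P i J \<le> cut_value N0 \<alpha> s r T P S"
proof -
  let ?C = "{(i, J) \<in> hyperarcs s r T. i \<in> S \<and> \<not> J \<subseteq> S}"
  have "finite ?C" using finite_hyperarcs[OF assms(2)] by (rule finite_subset[rotated]) auto
  moreover have "(i, J) \<in> ?C" using assms(4-6) by simp
  moreover have "\<And>a. a \<in> ?C \<Longrightarrow> 0 \<le> (case a of (i, J) \<Rightarrow> capacity N0 \<alpha> P i J)"
    using assms(1-3) by (auto intro: capacity_nonneg)
  ultimately show ?thesis unfolding cut_value_def
    using member_le_sum[of "(i, J)" ?C "\<lambda>(i, J). capacity N0 \<alpha> P i J"] by simp
qed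

lemma cut_value_split:
  assumes "s \<noteq> r" "finite T"
  shows "cut_value N0 \<alpha> s r T P S =
    (\<Sum>J\<in>{J\<in>src_arcs s r T. s \<in> S \<and> \<not> J \<subseteq> S}. capacity N0 \<alpha> P s J) +
    (\<Sum>J\<in>{J\<in>relay_arcs T. r \<in> S \<and> \<not> J \<subseteq> S}. capacity N0 \<alpha> P r J)"
proof -
  let ?A = "{J\<in>src_arcs s r T. s \<in> S \<and> \<not> J \<subseteq> S}"
  let ?B = "{J\<in>relay_arcs T. r \<in> S \<and> \<not> J \<subseteq> S}"
  have arcs: "{(i, J) \<in> hyperarcs s r T. i \<in> S \<and> \<not> J \<subseteq> S} = Pair s ` ?A \<union> Pair r ` ?B"
    unfolding hyperarcs_def by auto
  have "finite ?A" "finite ?B" using finite_src_arcs[OF assms(2)] finite_relay_arcs[OF assms(2)]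
    by auto
  then show ?thesis unfolding cut_value_def arcs using assms(1)
    by (subst sum.union_disjoint) (auto simp: sum.reindex inj_on_def)
qed

lemma cut_value_relay_outside:
  assumes "s \<noteq> r" "r \<notin> T" "s \<notin> T" "finite T" "t \<in> T"
  shows "cut_value N0 \<alpha> s r T P (insert s (T - {t})) =
    (\<Sum>J\<in>{J\<in>src_arcs s r T. t \<in> J \<or> r \<in> J}. capacity N0 \<alpha> P s J)"
proof -
  have "{J\<in>src_arcs s r T. s \<in> insert s (T - {t}) \<and> \<not> J \<subseteq> insert s (T - {t})} =
        {J\<in>src_arcs s r T. t \<in> J \<or> r \<in> J}"
    using assms by (auto simp: src_arcs_def)
  moreover have "r \<notin> insert s (T - {t})" using assms by auto
  ultimately show ?thesis by (simp only: cut_value_split[OF assms(1,4)]) simp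
qed

lemma cut_value_relay_inside:
  assumes "s \<noteq> r" "r \<notin> T" "s \<notin> T" "finite T" "t \<in> T"
  shows "cut_value N0 \<alpha> s r T P (insert s (insert r (T - {t}))) =
    (\<Sum>J\<in>{J\<in>src_arcs s r T. t \<in> J}. capacity N0 \<alpha> P s J) +
    (\<Sum>J\<in>{J\<in>relay_arcs T. t \<in> J}. capacity N0 \<alpha> P r J)"
proof -
  let ?S = "insert s (insert r (T - {t}))"
  have "{J\<in>src_arcs s r T. s \<in> ?S \<and> \<not> J \<subseteq> ?S} = {J\<in>src_arcs s r T. t \<in> J}"
    using assms by (auto simp: src_arcs_def)
  moreover have "{J\<in>relay_arcs T. r \<in> ?S \<and> \<not> J \<subseteq> ?S} = {J\<in>relay_arcs T. t \<in> J}"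
    using assms by (auto simp: relay_arcs_def)
  ultimately show ?thesis by (simp add: cut_value_split[OF assms(1,4)])
qed

text \<open>R_st is bounded above by any separating cut, and below by any common lower bound of the
  separating cuts (the cut {s} shows that there is one when t \<noteq> s).\<close>
lemma rate_st_le_cut_value:
  assumes "finite T" "S \<subseteq> insert s (insert r T)" "s \<in> S" "t \<notin> S"
  shows "rate_st N0 \<alpha> s r T P t \<le> cut_value N0 \<alpha> s r T P S"
  unfolding rate_st_def using assms by (intro Min_le) auto

lemma rate_st_ge:
  assumes "finite T" "s \<noteq> t"
    and "\<And>S. S \<subseteq> insert s (insert r T) \<Longrightarrow> s \<in> S \<Longrightarrow> t \<notin> S \<Longrightarrow> c \<le> cut_value N0 \<alpha> s r T P S"
  shows "c \<le> rate_st N0 \<alpha> s r T P t"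
proof -
  have "{s} \<in> {S. S \<subseteq> insert s (insert r T) \<and> s \<in> S \<and> t \<notin> S}" using assms(2) by auto
  then show ?thesis unfolding rate_st_def using assms(1,3)
    by (subst Min_ge_iff) (auto intro: finite_subset[of _ "Pow (insert s (insert r T))"])
qed

lemma multicast_rate_le_rate_st:
  assumes "finite T" "t \<in> T"
  shows "multicast_rate N0 \<alpha> s r T P \<le> rate_st N0 \<alpha> s r T P t"
  unfolding multicast_rate_def using assms by (intro Min_le) auto

lemma multicast_rate_ge:
  assumes "finite T" "T \<noteq> {}" "\<And>t. t \<in> T \<Longrightarrow> c \<le> rate_st N0 \<alpha> s r T P t"
  shows "c \<le> multicast_rate N0 \<alpha> s r T P"
  unfolding multicast_rate_def using assms by (subst Min_ge_iff) auto

text \<open>Bounds on the multicast rate of every allocation transfer to the optimum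
  R*_sT(r); the zero allocation shows that the supremum is over a nonempty set.\<close>
lemma opt_rate_le:
  assumes "0 \<le> Ps" "0 \<le> Pr" "\<And>P. valid_alloc Ps Pr s r T P \<Longrightarrow> multicast_rate N0 \<alpha> s r T P \<le> c"
  shows "opt_rate Ps Pr N0 \<alpha> s T r \<le> c"
  unfolding opt_rate_def
proof (rule cSUP_least)
  have "valid_alloc Ps Pr s r T (\<lambda>_ _. 0)" using assms(1,2) by (simp add: valid_alloc_def)
  then show "{P. valid_alloc Ps Pr s r T P} \<noteq> {}" by blast
qed (use assms(3) in auto)

lemma multicast_rate_le_opt_rate:
  assumes "valid_alloc Ps Pr s r T P"
    and "\<And>Q. valid_alloc Ps Pr s r T Q \<Longrightarrow> multicast_rate N0 \<alpha> s r T Q \<le> c"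
  shows "multicast_rate N0 \<alpha> s r T P \<le> opt_rate Ps Pr N0 \<alpha> s T r"
  unfolding opt_rate_def using assms by (intro cSUP_upper) (auto simp: bdd_above_def)

section \<open>The converse bound: no relay position beats rate P_s/(N0 (D_st/2)^\<alpha>)\<close>

text \<open>The two cuts separating t, with and
  without the relay on the source side, are bounded via the single-receiver capacity bounds
  and combined by the two-cut inequality.\<close>
lemma multicast_rate_upper_bound:
  assumes "finite T" "t \<in> T" "s \<notin> T" "r \<notin> insert s T" "0 < N0" "1 \<le> \<alpha>"
    and valid: "valid_alloc Ps Pr s r T P" and "Pr \<le> Ps"
  shows "multicast_rate N0 \<alpha> s r T P \<le> Ps / (N0 * (dist s t / 2) powr \<alpha>)"
proof -
  define X Y Z where "X = {J\<in>src_arcs s r T. t \<in> J}"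
    and "Y = {J\<in>src_arcs s r T. t \<notin> J \<and> r \<in> J}" and "Z = {J\<in>relay_arcs T. t \<in> J}"
  define x y where "x = (\<Sum>J\<in>X. P s J)" and "y = (\<Sum>J\<in>Y. P s J)"
  define d a b where "d = dist s t" and "a = dist s r" and "b = dist r t"
  have dist: "s \<noteq> r" "r \<notin> T" "s \<noteq> t" "r \<noteq> t" using assms(2-4) by auto
  have fin: "finite X" "finite Y" "finite Z" "X \<inter> Y = {}"
    using finite_src_arcs[OF assms(1)] finite_relay_arcs[OF assms(1)] by (auto simp: X_def Y_def Z_def)
  have src: "\<And>J. J \<in> src_arcs s r T \<Longrightarrow> finite J \<and> 0 \<le> P s J"
    and relay: "\<And>J. J \<in> relay_arcs T \<Longrightarrow> finite J \<and> 0 \<le> P r J"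
    using valid_alloc_nonneg[OF valid] assms(1)
    by (auto simp: src_arcs_def relay_arcs_def intro: finite_subset)
  have budget: "0 \<le> x" "0 \<le> y" "x + y \<le> Ps" "(\<Sum>J\<in>Z. P r J) \<le> Ps"
  proof -
    have "x + y = (\<Sum>J\<in>X \<union> Y. P s J)" unfolding x_def y_def using fin by (simp add: sum.union_disjoint)
    also have "\<dots> \<le> Ps" by (rule valid_alloc_partial_budget[OF valid assms(1)]) (auto simp: X_def Y_def)
    finally show "x + y \<le> Ps" .
    have "(\<Sum>J\<in>Z. P r J) \<le> Pr" by (rule valid_alloc_partial_budget[OF valid assms(1)]) (auto simp: Z_def)
    then show "(\<Sum>J\<in>Z. P r J) \<le> Ps" using \<open>Pr \<le> Ps\<close> by linarith
    show "0 \<le> x" "0 \<le> y" unfolding x_def y_def using src by (auto intro!: sum_nonneg simp: X_def Y_def)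
  qed
  have cap_X: "(\<Sum>J\<in>X. capacity N0 \<alpha> P s J) \<le> x / (N0 * d powr \<alpha>)"
    unfolding x_def d_def using src dist assms(5) fin by (intro sum_capacity_le_single) (auto simp: X_def)
  have cap_Y: "(\<Sum>J\<in>Y. capacity N0 \<alpha> P s J) \<le> y / (N0 * a powr \<alpha>)"
    unfolding y_def a_def using src dist assms(5) fin by (intro sum_capacity_le_single) (auto simp: Y_def)
  have cap_Z: "(\<Sum>J\<in>Z. capacity N0 \<alpha> P r J) \<le> Ps / (N0 * b powr \<alpha>)"
  proof -
    have "(\<Sum>J\<in>Z. capacity N0 \<alpha> P r J) \<le> (\<Sum>J\<in>Z. P r J) / (N0 * b powr \<alpha>)"
      unfolding b_def using relay dist assms(5) fin by (intro sum_capacity_le_single) (auto simp: Z_def)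
    also have "\<dots> \<le> Ps / (N0 * b powr \<alpha>)" using budget assms(5) by (intro divide_right_mono) auto
    finally show ?thesis .
  qed
  have "multicast_rate N0 \<alpha> s r T P \<le> rate_st N0 \<alpha> s r T P t"
    using assms(1,2) by (rule multicast_rate_le_rate_st)
  also have "\<dots> \<le> min (cut_value N0 \<alpha> s r T P (insert s (T - {t})))
                        (cut_value N0 \<alpha> s r T P (insert s (insert r (T - {t}))))"
    using assms(1) dist by (simp add: rate_st_le_cut_value subset_insertI2)
  also have "\<dots> \<le> min (x / d powr \<alpha> + y / a powr \<alpha>) (x / d powr \<alpha> + Ps / b powr \<alpha>) / N0"
  proof -
    have "{J\<in>src_arcs s r T. t \<in> J \<or> r \<in> J} = X \<union> Y" by (auto simp: X_def Y_def)
    then have "cut_value N0 \<alpha> s r T P (insert s (T - {t})) =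
        (\<Sum>J\<in>X. capacity N0 \<alpha> P s J) + (\<Sum>J\<in>Y. capacity N0 \<alpha> P s J)"
      by (simp add: cut_value_relay_outside[OF dist(1,2) assms(3,1,2)] sum.union_disjoint[OF fin(1,2,4)])
    then have "cut_value N0 \<alpha> s r T P (insert s (T - {t})) \<le> (x / d powr \<alpha> + y / a powr \<alpha>) / N0"
      using cap_X cap_Y by (simp add: add_divide_distrib mult.commute)
    moreover have "cut_value N0 \<alpha> s r T P (insert s (insert r (T - {t}))) \<le> (x / d powr \<alpha> + Ps / b powr \<alpha>) / N0"
      using cut_value_relay_inside[OF dist(1,2) assms(3,1,2)] cap_X cap_Z
      by (simp add: X_def Z_def add_divide_distrib mult.commute)
    ultimately show ?thesis by (auto simp: min_def)
  qed
  also have "\<dots> \<le> (Ps / (d / 2) powr \<alpha>) / N0"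
    using dist budget assms(5,6) dist_triangle[of s t r]
    by (intro divide_right_mono two_cut_bound) (auto simp: d_def a_def b_def)
  finally show ?thesis by (simp add: d_def mult.commute)
qed

section \<open>Achievability: a two-hop allocation for a relay covering the far receivers\<close>

definition two_hop_alloc ::
  "real \<Rightarrow> real \<Rightarrow> point \<Rightarrow> point \<Rightarrow> real \<Rightarrow> point set \<Rightarrow> point \<Rightarrow> point set \<Rightarrow> real" where
  "two_hop_alloc Ps Pr s m \<rho> T = (\<lambda>i J.
     if i = s \<and> J = insert m (T \<inter> cball s \<rho>) then Ps
     else if i = m \<and> J = T \<inter> cball m \<rho> then Pr else 0)"

lemma two_hop_alloc_valid:
  assumes "s \<noteq> m" "finite T" "0 \<le> Ps" "0 \<le> Pr"
  shows "valid_alloc Ps Pr s m T (two_hop_alloc Ps Pr s m \<rho> T)"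
proof -
  let ?P = "two_hop_alloc Ps Pr s m \<rho> T"
  have "?P s = (\<lambda>J. if J = insert m (T \<inter> cball s \<rho>) then Ps else 0)"
    and "?P m = (\<lambda>J. if J = T \<inter> cball m \<rho> then Pr else 0)"
    using assms(1) by (auto simp: two_hop_alloc_def)
  then have "(\<Sum>J\<in>src_arcs s m T. ?P s J) = (if insert m (T \<inter> cball s \<rho>) \<in> src_arcs s m T then Ps else 0)"
    and "(\<Sum>J\<in>relay_arcs T. ?P m J) = (if T \<inter> cball m \<rho> \<in> relay_arcs T then Pr else 0)"
    using finite_src_arcs[OF assms(2)] finite_relay_arcs[OF assms(2)] by (simp_all add: sum.delta)
  then show ?thesis using assms(3,4) by (auto simp: valid_alloc_def two_hop_alloc_def)
qed

text \<open>Both hyperarcs of the two-hop allocation have radius at most \<rho>, so each carries at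
  least min(P_s, P_r)/(N0 \<rho>^\<alpha>).\<close>
lemma two_hop_alloc_capacities:
  assumes "finite T" "m \<notin> insert s T" "0 < \<rho>" "dist s m \<le> \<rho>"
    and "0 < N0" "0 \<le> \<alpha>" "0 \<le> Ps" "0 \<le> Pr"
  defines "P \<equiv> two_hop_alloc Ps Pr s m \<rho> T" and "c \<equiv> min Ps Pr / (N0 * \<rho> powr \<alpha>)"
  shows "c \<le> capacity N0 \<alpha> P s (insert m (T \<inter> cball s \<rho>))"
    and "t \<in> T \<inter> cball m \<rho> \<Longrightarrow> c \<le> capacity N0 \<alpha> P m (T \<inter> cball m \<rho>)"
proof -
  have "s \<noteq> m" using assms(2) by auto
  have c_le: "c \<le> p / (N0 * \<rho> powr \<alpha>)" if "p = Ps \<or> p = Pr" for p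
    unfolding c_def using that assms(3,5) by (auto intro: divide_right_mono)
  have "c \<le> P s (insert m (T \<inter> cball s \<rho>)) / (N0 * \<rho> powr \<alpha>)"
    by (rule c_le) (simp add: P_def two_hop_alloc_def)
  also have "\<dots> \<le> capacity N0 \<alpha> P s (insert m (T \<inter> cball s \<rho>))"
    using assms(1,3-8) \<open>s \<noteq> m\<close>
    by (intro capacity_ge_radius[where j = m]) (auto simp: P_def two_hop_alloc_def dist_commute)
  finally show "c \<le> capacity N0 \<alpha> P s (insert m (T \<inter> cball s \<rho>))" .
  assume t: "t \<in> T \<inter> cball m \<rho>"
  have "c \<le> P m (T \<inter> cball m \<rho>) / (N0 * \<rho> powr \<alpha>)"
    by (rule c_le) (use \<open>s \<noteq> m\<close> in \<open>simp add: P_def two_hop_alloc_def\<close>)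
  also have "\<dots> \<le> capacity N0 \<alpha> P m (T \<inter> cball m \<rho>)"
    using assms(1-3,5-8) \<open>s \<noteq> m\<close> t
    by (intro capacity_ge_radius[where j = t]) (auto simp: P_def two_hop_alloc_def dist_commute)
  finally show "c \<le> capacity N0 \<alpha> P m (T \<inter> cball m \<rho>)" .
qed

text \<open>If every receiver lies within \<rho> of the source or of the relay, and the relay within \<rho>
  of the source, the two-hop allocation achieves rate min(P_s, P_r)/(N0 \<rho>^\<alpha>): a cut
  separating a receiver t either leaves out the relay or t is near the source, so that it is
  crossed by the source's hyperarc, or else t is near the relay on the source side, so that it
  is crossed by the relay's hyperarc.\<close>
lemma two_hop_alloc_rate:
  assumes "finite T" "T \<noteq> {}" "s \<notin> T" "m \<notin> insert s T"
    and "0 < \<rho>" "dist s m \<le> \<rho>" "T \<subseteq> cball s \<rho> \<union> cball m \<rho>"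
    and "0 < N0" "0 \<le> \<alpha>" "0 \<le> Ps" "0 \<le> Pr"
  shows "min Ps Pr / (N0 * \<rho> powr \<alpha>) \<le> multicast_rate N0 \<alpha> s m T (two_hop_alloc Ps Pr s m \<rho> T)"
proof -
  define P where "P = two_hop_alloc Ps Pr s m \<rho> T"
  define J0 J1 where "J0 = insert m (T \<inter> cball s \<rho>)" and "J1 = T \<inter> cball m \<rho>"
  define c where "c = min Ps Pr / (N0 * \<rho> powr \<alpha>)"
  note cap = two_hop_alloc_capacities[OF assms(1,4-6,8-11), folded P_def c_def J0_def J1_def]
  have valid: "valid_alloc Ps Pr s m T P"
    unfolding P_def using assms(1,4,10,11) by (intro two_hop_alloc_valid) auto
  have arc0: "(s, J0) \<in> hyperarcs s m T" and arc1: "J1 \<noteq> {} \<Longrightarrow> (m, J1) \<in> hyperarcs s m T"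
    by (auto simp: hyperarcs_def src_arcs_def relay_arcs_def J0_def J1_def)
  have "c \<le> rate_st N0 \<alpha> s m T P t" if "t \<in> T" for t
  proof (rule rate_st_ge)
    fix S assume S: "S \<subseteq> insert s (insert m T)" "s \<in> S" "t \<notin> S"
    show "c \<le> cut_value N0 \<alpha> s m T P S"
    proof (cases "t \<in> J0 \<or> m \<notin> S")
      case True
      then have "\<not> J0 \<subseteq> S" using S by (auto simp: J0_def)
      then have "capacity N0 \<alpha> P s J0 \<le> cut_value N0 \<alpha> s m T P S"
        using assms(8) by (intro capacity_le_cut_value[OF valid assms(1) _ arc0 S(2)]) auto
      then show ?thesis using cap(1) by linarith
    next
      case False
      then have "t \<in> J1" using that assms(7) by (auto simp: J0_def J1_def)
      then have "\<not> J1 \<subseteq> S" "J1 \<noteq> {}" using S by auto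
      then have "capacity N0 \<alpha> P m J1 \<le> cut_value N0 \<alpha> s m T P S"
        using False assms(8) by (intro capacity_le_cut_value[OF valid assms(1) _ arc1]) auto
      then show ?thesis using cap(2)[OF \<open>t \<in> J1\<close>] by linarith
    qed
  qed (use assms(1,3) that in auto)
  then show ?thesis unfolding c_def P_def using assms(1,2) by (intro multicast_rate_ge) auto
qed

theorem lemma3:
  fixes s tn :: point and T :: "point set" and Ps Pr N0 \<alpha> :: real
  assumes "finite T" and "tn \<in> T" and "s \<notin> T"
    and "\<forall>t \<in> T. dist s t \<le> dist s tn"
    and "Ps = Pr" and "Ps > 0" and "N0 > 0" and "\<alpha> \<ge> 2"
    and "T \<subseteq> cball s (dist s tn / 2) \<union> cball (midpoint s tn) (dist s tn / 2)"
    and "midpoint s tn \<notin> T"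
  shows "\<forall>r. r \<notin> insert s T \<longrightarrow>
           opt_rate Ps Pr N0 \<alpha> s T r \<le> opt_rate Ps Pr N0 \<alpha> s T (midpoint s tn)"
proof (intro allI impI)
  fix r assume r: "r \<notin> insert s T"
  define m c where "m = midpoint s tn" and "c = Ps / (N0 * (dist s tn / 2) powr \<alpha>)"
  have "s \<noteq> tn" using assms(2,3) by auto
  then have m: "m \<notin> insert s T" "dist s m = dist s tn / 2" "0 < dist s tn / 2"
    using assms(10) by (auto simp: m_def dist_midpoint)
  have converse: "multicast_rate N0 \<alpha> s r' T P \<le> c"
    if "r' \<notin> insert s T" "valid_alloc Ps Pr s r' T P" for r' P
    unfolding c_def using assms(1-3,5,7,8) that by (intro multicast_rate_upper_bound) auto
  have "opt_rate Ps Pr N0 \<alpha> s T r \<le> c"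
    using assms(5,6) converse[OF r] by (intro opt_rate_le) auto
  also have "c \<le> multicast_rate N0 \<alpha> s m T (two_hop_alloc Ps Pr s m (dist s tn / 2) T)"
  proof -
    have "min Ps Pr / (N0 * (dist s tn / 2) powr \<alpha>)
          \<le> multicast_rate N0 \<alpha> s m T (two_hop_alloc Ps Pr s m (dist s tn / 2) T)"
      using m assms(2,5-9) by (intro two_hop_alloc_rate[OF assms(1) _ assms(3)]) (auto simp: m_def)
    then show ?thesis using assms(5) by (simp add: c_def)
  qed
  also have "\<dots> \<le> opt_rate Ps Pr N0 \<alpha> s T m"
    using m(1) assms(1,5,6) converse
    by (intro multicast_rate_le_opt_rate two_hop_alloc_valid) auto
  finally show "opt_rate Ps Pr N0 \<alpha> s T r \<le> opt_rate Ps Pr N0 \<alpha> s T (midpoint s tn)"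
    by (simp add: m_def)
qed

end
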